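(* Let $(\mathcal{X},\mathcal{T})$ be a partially monotone system of order $N\geq2$ as in the context, where each $(X_i,\leq_i)$ is a bi-directed partially ordered set and $d_i$ is a complete metric on $X_i$. Assume there exists $\varphi\in\Phi$ such that $$d_i\big(T_i(x),T_i(y)\big)\leq\varphi\Big(\max_{1\le j\le N}d_j(x_j,y_j)\Big)\quad\text{for all }i\in\{1,\ldots,N\}\text{ and all }x,y\in X\text{ with }x\preccurlyeq_i y.$$ Assume also that either (d1) each $T_i$ is continuous (with respect to the product topology on $X$), or (d2) for every $i$, every nondecreasing convergent sequence in $X_i$ is bounded from above by its limit and every nonincreasing convergent sequence in $X_i$ is bounded from below by its limit. If there exist $x^0,y^0\in X$ such that $$x^0_i\leq_i T_i(\sigma_i(x^0,y^0))\quad\text{and}\quad y^0_i\geq_i T_i(\sigma_i(y^0,x^0))\quad\text{for all }i\in\{1,\ldots,N\},$$ then the system $x_i=T_i(x_1,\ldots,x_N)$, $i=1,\ldots,N$, has a unique solution $x^\ast\in X$. Moreover, for every $u^0,v^0\in X$, the sequences $(u^n),(v^n)$ in $X$ defined by $$u^{n+1}_i=T_i(\sigma_i(u^n,v^n)),\qquad v^{n+1}_i=T_i(\sigma_i(v^n,u^n))\qquad(i=1,\ldots,N,\ n\geq0)$$ satisfy $u^n_i\to x^\ast_i$ and $v^n_i\to x^\ast_i$ as $n\to\infty$ for all $i$.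
   Context: Let $N\geq2$ and let $(X_i,\leq_i)$, $i=1,\ldots,N$, be quasi-ordered sets. Let $X=X_1\times\cdots\times X_N$, with components $x=(x_1,\ldots,x_N)$. Let $T_i:X\to X_i$, $i=1,\dots,N$. The system is partially monotone if for each pair $(i,j)$ a type $\epsilon_{i,j}\in\{+,-\}$ is fixed such that $T_i$ is nondecreasing in its $j$-th variable (all other variables fixed) when $\epsilon_{i,j}=+$ and nonincreasing in its $j$-th variable when $\epsilon_{i,j}=-$ (if $T_i$ is constant in the $j$-th variable either type may be chosen, but once fixed it is used consistently). For each $i$ define $\sigma_i=(\sigma_{i,1},\ldots,\sigma_{i,N}):X^2\to X$ by $\sigma_{i,j}(x,y)=x_j$ if $\epsilon_{i,j}=+$ and $\sigma_{i,j}(x,y)=y_j$ if $\epsilon_{i,j}=-$. The quasi-order $\preccurlyeq_i$ on $X$ is: $x\preccurlyeq_i y$ iff for all $j$, $x_j\leq_j y_j$ when $\epsilon_{i,j}=+$ and $x_j\geq_j y_j$ when $\epsilon_{i,j}=-$. A quasi-ordered set is bi-directed if every two-element subset has both a lower bound and an upper bound. $\Phi$ is the set of nondecreasing functions $\varphi:[0,\infty)\to[0,\infty)$ with $\varphi^n(t)\to0$ as $n\to\infty$ for every $t\geq0$ ($\varphi^n$ the $n$-th iterate). *)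

theory Defs
  imports "HOL-Analysis.Analysis"
begin

text \<open>Components are indexed by 0..<N. All spaces X i live in one ambient type 'a;
  a point of the product X = X_0 x ... x X_(N-1) is an extensional function in PiE {..<N} X.\<close>

definition partial_order_on_set :: "'a set \<Rightarrow> ('a \<Rightarrow> 'a \<Rightarrow> bool) \<Rightarrow> bool" where
  "partial_order_on_set A le \<longleftrightarrow>
     (\<forall>x\<in>A. le x x) \<and>
     (\<forall>x\<in>A. \<forall>y\<in>A. le x y \<and> le y x \<longrightarrow> x = y) \<and>
     (\<forall>x\<in>A. \<forall>y\<in>A. \<forall>z\<in>A. le x y \<and> le y z \<longrightarrow> le x z)"

definition bi_directed :: "'a set \<Rightarrow> ('a \<Rightarrow> 'a \<Rightarrow> bool) \<Rightarrow> bool" where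
  "bi_directed A le \<longleftrightarrow>
     (\<forall>x\<in>A. \<forall>y\<in>A. (\<exists>l\<in>A. le l x \<and> le l y) \<and> (\<exists>u\<in>A. le x u \<and> le y u))"

definition Phi :: "(real \<Rightarrow> real) \<Rightarrow> bool" where
  "Phi \<phi> \<longleftrightarrow>
     (\<forall>t\<ge>0. \<phi> t \<ge> 0) \<and>
     (\<forall>s t. 0 \<le> s \<longrightarrow> s \<le> t \<longrightarrow> \<phi> s \<le> \<phi> t) \<and>
     (\<forall>t\<ge>0. (\<lambda>n. (\<phi> ^^ n) t) \<longlonglongrightarrow> 0)"

text \<open>Partial monotonicity with types eps i j (True = '+', False = '-').\<close>
definition partially_monotone ::
  "nat \<Rightarrow> (nat \<Rightarrow> 'a set) \<Rightarrow> (nat \<Rightarrow> 'a \<Rightarrow> 'a \<Rightarrow> bool) \<Rightarrow> (nat \<Rightarrow> nat \<Rightarrow> bool)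
     \<Rightarrow> (nat \<Rightarrow> (nat \<Rightarrow> 'a) \<Rightarrow> 'a) \<Rightarrow> bool" where
  "partially_monotone N X le eps T \<longleftrightarrow>
     (\<forall>i<N. \<forall>j<N. \<forall>x\<in>PiE {..<N} X. \<forall>y\<in>PiE {..<N} X.
        (\<forall>k<N. k \<noteq> j \<longrightarrow> x k = y k) \<longrightarrow> le j (x j) (y j) \<longrightarrow>
        (if eps i j then le i (T i x) (T i y) else le i (T i y) (T i x)))"

definition sigma :: "nat \<Rightarrow> (nat \<Rightarrow> nat \<Rightarrow> bool) \<Rightarrow> nat \<Rightarrow> (nat \<Rightarrow> 'a) \<Rightarrow> (nat \<Rightarrow> 'a) \<Rightarrow> nat \<Rightarrow> 'a" where
  "sigma N eps i x y = (\<lambda>j. if j < N then (if eps i j then x j else y j) else undefined)"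

definition prec :: "nat \<Rightarrow> (nat \<Rightarrow> 'a \<Rightarrow> 'a \<Rightarrow> bool) \<Rightarrow> (nat \<Rightarrow> nat \<Rightarrow> bool) \<Rightarrow> nat
     \<Rightarrow> (nat \<Rightarrow> 'a) \<Rightarrow> (nat \<Rightarrow> 'a) \<Rightarrow> bool" where
  "prec N le eps i x y \<longleftrightarrow>
     (\<forall>j<N. if eps i j then le j (x j) (y j) else le j (y j) (x j))"

end

theory Submission
  imports Defs
begin

text \<open>The two sequences \<open>u\<^sup>n, v\<^sup>n\<close> are the orbit of a single map
  \<open>F (x, y) = (T(\<sigma>(x, y)), T(\<sigma>(y, x)))\<close> on \<open>X \<times> X\<close>. Order pairs by
  \<open>(x, y) \<sqsubseteq> (x', y')\<close> iff \<open>x \<le> x'\<close> and \<open>y' \<le> y\<close> componentwise; partial monotonicity makes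
  \<open>F\<close> monotone, and the contraction hypothesis gives \<open>\<rho>(F p, F q) \<le> \<phi>(\<rho>(p, q))\<close> for comparable
  \<open>p \<sqsubseteq> q\<close>, where \<open>\<rho>\<close> is the maximum of the sup metrics of both components. Starting from
  \<open>(x\<^sup>0, y\<^sup>0) \<sqsubseteq> F(x\<^sup>0, y\<^sup>0)\<close> the orbit is increasing, hence Cauchy, and (d1) or (d2) makes
  its limit a fixed point. Bi-directedness gives any two pairs a common lower bound, so any
  two orbits approach each other: the fixed point is unique and attracts every orbit.
  Finally \<open>F\<close> commutes with swapping the components, so the unique fixed point is a diagonal
  pair \<open>(x\<^sup>*, x\<^sup>*)\<close>, and the fixed points of \<open>F\<close> on the diagonal are exactly the
  solutions of the system.\<close>

section \<open>Monotone \<open>\<phi>\<close>-contractions on ordered metric spaces\<close>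

lemma tendsto_0_if_le:
  fixes f g :: "'a \<Rightarrow> real"
  assumes "\<And>x. 0 \<le> f x" "\<And>x. f x \<le> g x" "(g \<longlongrightarrow> 0) F"
  shows "(f \<longlongrightarrow> 0) F"
  by (rule Lim_null_comparison[OF always_eventually assms(3)]) (simp add: assms)

lemma Phi_mono: "Phi \<phi> \<Longrightarrow> 0 \<le> s \<Longrightarrow> s \<le> t \<Longrightarrow> \<phi> s \<le> \<phi> t"
  unfolding Phi_def by blast

lemma Phi_funpow_tendsto_0: "Phi \<phi> \<Longrightarrow> 0 \<le> t \<Longrightarrow> (\<lambda>n. (\<phi> ^^ n) t) \<longlonglongrightarrow> 0"
  unfolding Phi_def by blast

lemma Phi_less:
  assumes \<phi>: "Phi \<phi>" and t: "0 < t"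
  shows "\<phi> t < t"
proof (rule ccontr)
  assume "\<not> \<phi> t < t"
  then have "t \<le> (\<phi> ^^ n) t" for n
  proof (induction n)
    case (Suc n)
    then have "\<phi> t \<le> \<phi> ((\<phi> ^^ n) t)"
      using Phi_mono[OF \<phi>] t by simp
    with Suc show ?case by simp
  qed simp
  moreover have "(\<lambda>n. (\<phi> ^^ n) t) \<longlonglongrightarrow> 0"
    using Phi_funpow_tendsto_0[OF \<phi>] t by simp
  ultimately have "t \<le> 0"
    by (intro LIMSEQ_le_const) auto
  with t show False by simp
qed

lemma Phi_le:
  assumes \<phi>: "Phi \<phi>" and t: "0 \<le> t"
  shows "\<phi> t \<le> t"
proof (cases "t = 0")
  case True
  show ?thesis
  proof (rule ccontr)
    assume "\<not> \<phi> t \<le> t"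
    with True have pos: "0 < \<phi> 0" by simp
    then have "\<phi> (\<phi> 0) < \<phi> 0"
      by (rule Phi_less[OF \<phi>])
    moreover have "\<phi> 0 \<le> \<phi> (\<phi> 0)"
      using pos by (intro Phi_mono[OF \<phi>]) simp_all
    ultimately show False by simp
  qed
next
  case False
  with t have "\<phi> t < t"
    by (intro Phi_less[OF \<phi>]) simp
  then show ?thesis by simp
qed

locale ordered_phi_contraction = Metric_space S \<rho>
  for S :: "'b set" and \<rho> :: "'b \<Rightarrow> 'b \<Rightarrow> real" +
  fixes R :: "'b \<Rightarrow> 'b \<Rightarrow> bool" and F :: "'b \<Rightarrow> 'b" and \<phi> :: "real \<Rightarrow> real"
  assumes Phi: "Phi \<phi>"
    and F_in: "p \<in> S \<Longrightarrow> F p \<in> S"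
    and R_refl: "p \<in> S \<Longrightarrow> R p p"
    and R_trans: "p \<in> S \<Longrightarrow> q \<in> S \<Longrightarrow> r \<in> S \<Longrightarrow> R p q \<Longrightarrow> R q r \<Longrightarrow> R p r"
    and F_mono: "p \<in> S \<Longrightarrow> q \<in> S \<Longrightarrow> R p q \<Longrightarrow> R (F p) (F q)"
    and common_lower_bound: "p \<in> S \<Longrightarrow> q \<in> S \<Longrightarrow> \<exists>r\<in>S. R r p \<and> R r q"
    and contraction: "p \<in> S \<Longrightarrow> q \<in> S \<Longrightarrow> R p q \<Longrightarrow> \<rho> (F p) (F q) \<le> \<phi> (\<rho> p q)"
begin

lemma funpow_in: "p \<in> S \<Longrightarrow> (F ^^ n) p \<in> S"
  by (induction n) (auto intro: F_in)

lemma funpow_mono: "p \<in> S \<Longrightarrow> q \<in> S \<Longrightarrow> R p q \<Longrightarrow> R ((F ^^ n) p) ((F ^^ n) q)"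
  by (induction n) (auto intro: F_mono funpow_in)

lemma funpow_contraction:
  assumes "p \<in> S" "q \<in> S" "R p q"
  shows "\<rho> ((F ^^ n) p) ((F ^^ n) q) \<le> (\<phi> ^^ n) (\<rho> p q)"
proof (induction n)
  case (Suc n)
  have "\<rho> ((F ^^ Suc n) p) ((F ^^ Suc n) q) \<le> \<phi> (\<rho> ((F ^^ n) p) ((F ^^ n) q))"
    using assms by (simp add: contraction funpow_in funpow_mono)
  also have "\<dots> \<le> (\<phi> ^^ Suc n) (\<rho> p q)"
    using Suc Phi_mono[OF Phi] by simp
  finally show ?case .
qed simp

lemma orbits_approach:
  assumes p: "p \<in> S" and q: "q \<in> S"
  shows "(\<lambda>n. \<rho> ((F ^^ n) p) ((F ^^ n) q)) \<longlonglongrightarrow> 0"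
proof -
  obtain r where r: "r \<in> S" "R r p" "R r q"
    using common_lower_bound[OF p q] by blast
  have bound: "\<rho> ((F ^^ n) p) ((F ^^ n) q) \<le> (\<phi> ^^ n) (\<rho> r p) + (\<phi> ^^ n) (\<rho> r q)" for n
  proof -
    have "\<rho> ((F ^^ n) p) ((F ^^ n) q) \<le> \<rho> ((F ^^ n) r) ((F ^^ n) p) + \<rho> ((F ^^ n) r) ((F ^^ n) q)"
      using p q r(1) by (intro triangle'' funpow_in)
    also have "\<dots> \<le> (\<phi> ^^ n) (\<rho> r p) + (\<phi> ^^ n) (\<rho> r q)"
      using p q r by (intro add_mono funpow_contraction)
    finally show ?thesis .
  qed
  have "(\<lambda>n. (\<phi> ^^ n) (\<rho> r p) + (\<phi> ^^ n) (\<rho> r q)) \<longlonglongrightarrow> 0 + 0"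
    by (intro tendsto_add Phi_funpow_tendsto_0[OF Phi] nonneg)
  then show ?thesis
    by (intro tendsto_0_if_le[OF nonneg bound]) simp
qed

lemma orbit_increasing:
  assumes p0: "p0 \<in> S" "R p0 (F p0)" and "m \<le> n"
  shows "R ((F ^^ m) p0) ((F ^^ n) p0)"
  using \<open>m \<le> n\<close>
proof (induction n rule: dec_induct)
  case (step n)
  have "R ((F ^^ n) p0) ((F ^^ n) (F p0))"
    using p0 by (simp add: F_in funpow_mono)
  then have "R ((F ^^ n) p0) ((F ^^ Suc n) p0)"
    by (simp add: funpow_swap1)
  with step p0 show ?case
    using R_trans funpow_in by blast
qed (simp add: R_refl funpow_in p0)

lemma orbit_MCauchy:
  assumes p0: "p0 \<in> S" "R p0 (F p0)"
  shows "MCauchy (\<lambda>n. (F ^^ n) p0)"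
  unfolding MCauchy_def
proof (intro conjI allI impI)
  show "range (\<lambda>n. (F ^^ n) p0) \<subseteq> S"
    using p0 funpow_in by blast
  define s where "s n = (F ^^ n) p0" for n
  have s_in: "s n \<in> S" for n
    using p0 funpow_in s_def by simp
  fix e :: real assume "e > 0"
  define \<epsilon> where "\<epsilon> = e / 3"
  have "\<epsilon> > 0" using \<open>e > 0\<close> by (simp add: \<epsilon>_def)
  then have "\<epsilon> - \<phi> \<epsilon> > 0"
    using Phi_less[OF Phi] by simp
  moreover have "(\<lambda>n. \<rho> (s n) (s (Suc n))) \<longlonglongrightarrow> 0"
    using orbits_approach[OF p0(1) F_in[OF p0(1)]] by (simp add: s_def funpow_swap1)
  ultimately obtain M where M: "\<And>n. n \<ge> M \<Longrightarrow> \<rho> (s n) (s (Suc n)) < \<epsilon> - \<phi> \<epsilon>"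
    unfolding LIMSEQ_iff by fastforce
  \<comment> \<open>A step shorter than \<open>\<epsilon> - \<phi> \<epsilon>\<close> keeps the orbit inside the \<open>\<epsilon>\<close>-ball around \<open>s M\<close>.\<close>
  have ball: "\<rho> (s M) (s (M + k)) \<le> \<epsilon>" for k
  proof (induction k)
    case 0
    show ?case using s_in \<open>\<epsilon> > 0\<close> by simp
  next
    case (Suc k)
    have "\<rho> (s (Suc M)) (s (Suc (M + k))) \<le> \<phi> (\<rho> (s M) (s (M + k)))"
      using contraction[OF s_in s_in] orbit_increasing[OF p0] by (simp add: s_def)
    also have "\<dots> \<le> \<phi> \<epsilon>"
      using Suc Phi_mono[OF Phi] by simp
    finally have "\<rho> (s (Suc M)) (s (M + Suc k)) \<le> \<phi> \<epsilon>" by simp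
    moreover have "\<rho> (s M) (s (M + Suc k)) \<le> \<rho> (s M) (s (Suc M)) + \<rho> (s (Suc M)) (s (M + Suc k))"
      using s_in by (intro triangle)
    ultimately show ?case
      using M[of M] by simp
  qed
  show "\<exists>K. \<forall>n n'. K \<le> n \<longrightarrow> K \<le> n' \<longrightarrow> \<rho> ((F ^^ n) p0) ((F ^^ n') p0) < e"
  proof (intro exI allI impI)
    fix n n' assume "M \<le> n" "M \<le> n'"
    then have "\<rho> (s M) (s n) \<le> \<epsilon>" "\<rho> (s M) (s n') \<le> \<epsilon>"
      using ball[of "n - M"] ball[of "n' - M"] by simp_all
    moreover have "\<rho> (s n) (s n') \<le> \<rho> (s M) (s n) + \<rho> (s M) (s n')"
      using s_in by (intro triangle'')
    ultimately show "\<rho> ((F ^^ n) p0) ((F ^^ n') p0) < e"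
      using \<open>e > 0\<close> by (simp add: s_def \<epsilon>_def)
  qed
qed

lemma fixpoint_attracts:
  assumes p: "p \<in> S" "F p = p" and w: "w \<in> S"
  shows "limitin mtopology (\<lambda>n. (F ^^ n) w) p sequentially"
proof -
  have "(F ^^ n) p = p" for n
    using p(2) by (induction n) simp_all
  then have "(\<lambda>n. \<rho> ((F ^^ n) w) p) \<longlonglongrightarrow> 0"
    using orbits_approach[OF w p(1)] by simp
  then show ?thesis
    using p(1) w funpow_in by (simp add: limitin_metric_dist_null)
qed

lemma orbit_image_converges_if_upper_bound:
  assumes lim: "limitin mtopology (\<lambda>n. (F ^^ n) p0) p sequentially"
    and p0: "p0 \<in> S" and bound: "\<And>n. R ((F ^^ n) p0) p"
  shows "limitin mtopology (\<lambda>n. F ((F ^^ n) p0)) (F p) sequentially"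
proof -
  have p: "p \<in> S" and dist: "(\<lambda>n. \<rho> ((F ^^ n) p0) p) \<longlonglongrightarrow> 0"
    using lim by (simp_all add: limitin_metric_dist_null)
  have "\<rho> (F ((F ^^ n) p0)) (F p) \<le> \<rho> ((F ^^ n) p0) p" for n
    using contraction[OF funpow_in[OF p0] p bound] Phi_le[OF Phi nonneg] by (rule order_trans)
  then have "(\<lambda>n. \<rho> (F ((F ^^ n) p0)) (F p)) \<longlonglongrightarrow> 0"
    by (rule tendsto_0_if_le[OF nonneg _ dist])
  then show ?thesis
    using p p0 by (simp add: limitin_metric_dist_null F_in funpow_in)
qed

theorem unique_attracting_fixpoint:
  assumes complete: mcomplete and p0: "p0 \<in> S" "R p0 (F p0)"
    and image_converges: "\<And>p. limitin mtopology (\<lambda>n. (F ^^ n) p0) p sequentially \<Longrightarrow>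
          limitin mtopology (\<lambda>n. F ((F ^^ n) p0)) (F p) sequentially"
  shows "\<exists>p\<in>S. F p = p \<and> (\<forall>q\<in>S. F q = q \<longrightarrow> q = p) \<and>
           (\<forall>w\<in>S. limitin mtopology (\<lambda>n. (F ^^ n) w) p sequentially)"
proof -
  obtain p where lim: "limitin mtopology (\<lambda>n. (F ^^ n) p0) p sequentially"
    using complete orbit_MCauchy[OF p0] unfolding mcomplete_def by blast
  then have p: "p \<in> S"
    by (simp add: limitin_metric_dist_null)
  have "limitin mtopology (\<lambda>n. (F ^^ (n + 1)) p0) p sequentially"
    using lim by (rule limitin_sequentially_offset)
  then have "limitin mtopology (\<lambda>n. F ((F ^^ n) p0)) p sequentially"
    by simp
  with image_converges[OF lim] have fixed: "F p = p"
    by (rule limitin_metric_unique) simp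
  have "q = p" if "q \<in> S" "F q = q" for q
    using fixpoint_attracts[OF that \<open>q \<in> S\<close>] fixpoint_attracts[OF p fixed \<open>q \<in> S\<close>]
    by (rule limitin_metric_unique) simp
  with p fixed fixpoint_attracts show ?thesis
    by blast
qed

end

section \<open>Max and sup metrics on products\<close>

definition max_dist :: "('a \<Rightarrow> 'a \<Rightarrow> real) \<Rightarrow> ('b \<Rightarrow> 'b \<Rightarrow> real) \<Rightarrow> 'a \<times> 'b \<Rightarrow> 'a \<times> 'b \<Rightarrow> real"
  where "max_dist d1 d2 p q = max (d1 (fst p) (fst q)) (d2 (snd p) (snd q))"

context Metric_space12
begin

lemma max_dist_metric: "Metric_space (M1 \<times> M2) (max_dist d1 d2)"
proof
  fix p q r assume "p \<in> M1 \<times> M2" "q \<in> M1 \<times> M2" "r \<in> M1 \<times> M2"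
  then have "d1 (fst p) (fst r) \<le> d1 (fst p) (fst q) + d1 (fst q) (fst r)"
    and "d2 (snd p) (snd r) \<le> d2 (snd p) (snd q) + d2 (snd q) (snd r)"
    by (auto intro: M1.triangle M2.triangle)
  then show "max_dist d1 d2 p r \<le> max_dist d1 d2 p q + max_dist d1 d2 q r"
    unfolding max_dist_def by linarith
next
  fix p q assume "p \<in> M1 \<times> M2" "q \<in> M1 \<times> M2"
  moreover have "max a b = 0 \<longleftrightarrow> a = 0 \<and> b = 0" if "0 \<le> a" "0 \<le> b" for a b :: real
    using that by (auto simp: max_def)
  ultimately show "max_dist d1 d2 p q = 0 \<longleftrightarrow> p = q"
    unfolding max_dist_def prod_eq_iff by (simp add: mem_Times_iff)
qed (simp_all add: max_dist_def M1.commute M2.commute max.coboundedI1)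

lemma limitin_max_dist_iff:
  "limitin (Metric_space.mtopology (M1 \<times> M2) (max_dist d1 d2)) f l F \<longleftrightarrow>
     limitin M1.mtopology (\<lambda>x. fst (f x)) (fst l) F \<and> limitin M2.mtopology (\<lambda>x. snd (f x)) (snd l) F"
proof -
  interpret Metric_space "M1 \<times> M2" "max_dist d1 d2"
    by (rule max_dist_metric)
  have "((\<lambda>x. max_dist d1 d2 (f x) l) \<longlongrightarrow> 0) F \<longleftrightarrow>
        ((\<lambda>x. d1 (fst (f x)) (fst l)) \<longlongrightarrow> 0) F \<and> ((\<lambda>x. d2 (snd (f x)) (snd l)) \<longlongrightarrow> 0) F"
  proof (intro iffI conjI)
    assume max: "((\<lambda>x. max_dist d1 d2 (f x) l) \<longlongrightarrow> 0) F"
    show "((\<lambda>x. d1 (fst (f x)) (fst l)) \<longlongrightarrow> 0) F" "((\<lambda>x. d2 (snd (f x)) (snd l)) \<longlongrightarrow> 0) F"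
      by (rule tendsto_0_if_le[OF _ _ max], simp_all add: max_dist_def)+
  next
    assume "((\<lambda>x. d1 (fst (f x)) (fst l)) \<longlongrightarrow> 0) F \<and> ((\<lambda>x. d2 (snd (f x)) (snd l)) \<longlongrightarrow> 0) F"
    then have "((\<lambda>x. max_dist d1 d2 (f x) l) \<longlongrightarrow> max 0 0) F"
      unfolding max_dist_def by (intro tendsto_max) auto
    then show "((\<lambda>x. max_dist d1 d2 (f x) l) \<longlongrightarrow> 0) F"
      by simp
  qed
  then show ?thesis
    unfolding limitin_metric_dist_null M1.limitin_metric_dist_null M2.limitin_metric_dist_null
      mem_Times_iff eventually_conj_iff
    by blast
qed

lemma mcomplete_max_dist:
  assumes "M1.mcomplete" "M2.mcomplete"
  shows "Metric_space.mcomplete (M1 \<times> M2) (max_dist d1 d2)"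
proof -
  interpret Metric_space "M1 \<times> M2" "max_dist d1 d2"
    by (rule max_dist_metric)
  show ?thesis
    unfolding mcomplete_def
  proof (intro allI impI)
    fix \<sigma> assume "MCauchy \<sigma>"
    then have range: "range \<sigma> \<subseteq> M1 \<times> M2"
      and cauchy: "\<And>\<epsilon>. \<epsilon> > 0 \<Longrightarrow> \<exists>N. \<forall>n n'. N \<le> n \<longrightarrow> N \<le> n' \<longrightarrow>
          d1 (fst (\<sigma> n)) (fst (\<sigma> n')) < \<epsilon> \<and> d2 (snd (\<sigma> n)) (snd (\<sigma> n')) < \<epsilon>"
      unfolding MCauchy_def max_dist_def by simp_all
    have "M1.MCauchy (\<lambda>n. fst (\<sigma> n))" "M2.MCauchy (\<lambda>n. snd (\<sigma> n))"
      unfolding M1.MCauchy_def M2.MCauchy_def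
      using range cauchy by (simp_all add: image_subset_iff mem_Times_iff) meson+
    then obtain a b where "limitin M1.mtopology (\<lambda>n. fst (\<sigma> n)) a sequentially"
      "limitin M2.mtopology (\<lambda>n. snd (\<sigma> n)) b sequentially"
      using assms unfolding M1.mcomplete_def M2.mcomplete_def by blast
    then show "\<exists>l. limitin mtopology \<sigma> l sequentially"
      using limitin_max_dist_iff[of \<sigma> "(a, b)"] by auto
  qed
qed

end

text \<open>\<open>Max {}\<close> is unspecified, hence the assumption \<open>I \<noteq> {}\<close> below.\<close>

definition sup_dist :: "'i set \<Rightarrow> ('i \<Rightarrow> 'a \<Rightarrow> 'a \<Rightarrow> real) \<Rightarrow> ('i \<Rightarrow> 'a) \<Rightarrow> ('i \<Rightarrow> 'a) \<Rightarrow> real"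
  where "sup_dist I d x y = Max ((\<lambda>i. d i (x i) (y i)) ` I)"

lemma sup_dist_ge: "finite I \<Longrightarrow> i \<in> I \<Longrightarrow> d i (x i) (y i) \<le> sup_dist I d x y"
  unfolding sup_dist_def by (rule Max_ge) auto

lemma sup_dist_le_iff:
  "finite I \<Longrightarrow> I \<noteq> {} \<Longrightarrow> sup_dist I d x y \<le> e \<longleftrightarrow> (\<forall>i\<in>I. d i (x i) (y i) \<le> e)"
  unfolding sup_dist_def by (subst Max_le_iff) auto

lemma sup_dist_le_sum:
  assumes "finite I" "I \<noteq> {}" "\<And>i. i \<in> I \<Longrightarrow> 0 \<le> d i (x i) (y i)"
  shows "sup_dist I d x y \<le> (\<Sum>i\<in>I. d i (x i) (y i))"
  using assms by (auto simp: sup_dist_le_iff intro!: member_le_sum)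

context
  fixes I :: "'i set" and X :: "'i \<Rightarrow> 'a set" and d :: "'i \<Rightarrow> 'a \<Rightarrow> 'a \<Rightarrow> real"
  assumes finite: "finite I" and nonempty: "I \<noteq> {}"
    and metric: "\<And>i. i \<in> I \<Longrightarrow> Metric_space (X i) (d i)"
begin

lemma sup_dist_metric: "Metric_space (PiE I X) (sup_dist I d)"
proof
  fix x y
  obtain i where i: "i \<in> I"
    using nonempty by blast
  show "0 \<le> sup_dist I d x y"
    using Metric_space.nonneg[OF metric[OF i]] sup_dist_ge[OF finite i] by (rule order_trans)
  have "(\<lambda>i. d i (x i) (y i)) ` I = (\<lambda>i. d i (y i) (x i)) ` I"
    by (rule image_cong) (simp_all add: Metric_space.commute[OF metric])
  then show "sup_dist I d x y = sup_dist I d y x"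
    by (simp add: sup_dist_def)
next
  fix x y assume x: "x \<in> PiE I X" and y: "y \<in> PiE I X"
  show "sup_dist I d x y = 0 \<longleftrightarrow> x = y"
  proof
    assume "sup_dist I d x y = 0"
    then have "d i (x i) (y i) = 0" if "i \<in> I" for i
      using sup_dist_ge[OF finite that] Metric_space.nonneg[OF metric[OF that]]
      by (metis order_antisym_conv)
    then show "x = y"
      using x y Metric_space.zero[OF metric] by (intro PiE_ext[OF x y]) (simp add: PiE_iff)
  next
    assume "x = y"
    have "(\<lambda>i. d i (x i) (x i)) ` I = (\<lambda>_. 0) ` I"
      using x by (intro image_cong) (simp_all add: Metric_space.mdist_zero[OF metric] PiE_iff)
    with \<open>x = y\<close> nonempty show "sup_dist I d x y = 0"
      by (simp add: sup_dist_def image_constant_conv)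
  qed
next
  fix x y z assume xyz: "x \<in> PiE I X" "y \<in> PiE I X" "z \<in> PiE I X"
  have "d i (x i) (z i) \<le> sup_dist I d x y + sup_dist I d y z" if i: "i \<in> I" for i
  proof -
    have "d i (x i) (z i) \<le> d i (x i) (y i) + d i (y i) (z i)"
      using xyz i by (intro Metric_space.triangle[OF metric[OF i]]) (simp_all add: PiE_iff)
    also have "\<dots> \<le> sup_dist I d x y + sup_dist I d y z"
      using sup_dist_ge[OF finite i] sup_dist_ge[OF finite i] by (rule add_mono)
    finally show ?thesis .
  qed
  then show "sup_dist I d x z \<le> sup_dist I d x y + sup_dist I d y z"
    by (simp add: sup_dist_le_iff[OF finite nonempty])
qed

lemma limitin_sup_dist_iff:
  assumes f: "\<And>x. f x \<in> PiE I X" and l: "l \<in> extensional I"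
  shows "limitin (Metric_space.mtopology (PiE I X) (sup_dist I d)) f l F \<longleftrightarrow>
           (\<forall>i\<in>I. limitin (Metric_space.mtopology (X i) (d i)) (\<lambda>x. f x i) (l i) F)"
proof -
  have f_in: "f x i \<in> X i" if "i \<in> I" for x i
    using f that by (auto simp: PiE_iff)
  have nonneg: "0 \<le> d i a b" if "i \<in> I" for i a b
    using Metric_space.nonneg[OF metric[OF that]] .
  have tendsto_iff: "((\<lambda>x. sup_dist I d (f x) l) \<longlongrightarrow> 0) F \<longleftrightarrow> (\<forall>i\<in>I. ((\<lambda>x. d i (f x i) (l i)) \<longlongrightarrow> 0) F)"
  proof (intro iffI ballI)
    fix i assume sup: "((\<lambda>x. sup_dist I d (f x) l) \<longlongrightarrow> 0) F" and i: "i \<in> I"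
    show "((\<lambda>x. d i (f x i) (l i)) \<longlongrightarrow> 0) F"
      using nonneg[OF i] sup_dist_ge[OF finite i] sup by (rule tendsto_0_if_le)
  next
    assume "\<forall>i\<in>I. ((\<lambda>x. d i (f x i) (l i)) \<longlongrightarrow> 0) F"
    then have "((\<lambda>x. \<Sum>i\<in>I. d i (f x i) (l i)) \<longlongrightarrow> 0) F"
      by (intro tendsto_null_sum) auto
    moreover have "sup_dist I d (f x) l \<le> (\<Sum>i\<in>I. d i (f x i) (l i))" for x
      using nonneg by (intro sup_dist_le_sum[OF finite nonempty])
    ultimately show "((\<lambda>x. sup_dist I d (f x) l) \<longlongrightarrow> 0) F"
      by (intro tendsto_0_if_le[OF Metric_space.nonneg[OF sup_dist_metric]])
  qed
  moreover have "l \<in> PiE I X \<longleftrightarrow> (\<forall>i\<in>I. l i \<in> X i)"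
    using l by (simp add: PiE_iff)
  ultimately show ?thesis
    unfolding Metric_space.limitin_metric_dist_null[OF sup_dist_metric]
    by (simp add: Metric_space.limitin_metric_dist_null[OF metric] f f_in ball_conj_distrib
        cong: ball_cong)
qed

lemma mcomplete_sup_dist:
  assumes complete: "\<And>i. i \<in> I \<Longrightarrow> Metric_space.mcomplete (X i) (d i)"
  shows "Metric_space.mcomplete (PiE I X) (sup_dist I d)"
  unfolding Metric_space.mcomplete_def[OF sup_dist_metric]
proof (intro allI impI)
  fix \<sigma> assume cauchy: "Metric_space.MCauchy (PiE I X) (sup_dist I d) \<sigma>"
  then have \<sigma>: "\<sigma> n \<in> PiE I X" for n
    by (auto simp: Metric_space.MCauchy_def[OF sup_dist_metric])
  have "\<exists>a. limitin (Metric_space.mtopology (X i) (d i)) (\<lambda>n. \<sigma> n i) a sequentially" if i: "i \<in> I" for i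
  proof -
    have "Metric_space.MCauchy (X i) (d i) (\<lambda>n. \<sigma> n i)"
      unfolding Metric_space.MCauchy_def[OF metric[OF i]]
    proof (intro conjI allI impI)
      show "range (\<lambda>n. \<sigma> n i) \<subseteq> X i"
        using \<sigma> i by (auto simp: PiE_iff)
      fix \<epsilon> :: real assume "\<epsilon> > 0"
      then obtain K where "\<And>n n'. K \<le> n \<Longrightarrow> K \<le> n' \<Longrightarrow> sup_dist I d (\<sigma> n) (\<sigma> n') < \<epsilon>"
        using cauchy unfolding Metric_space.MCauchy_def[OF sup_dist_metric] by meson
      then show "\<exists>K. \<forall>n n'. K \<le> n \<longrightarrow> K \<le> n' \<longrightarrow> d i (\<sigma> n i) (\<sigma> n' i) < \<epsilon>"
        using sup_dist_ge[OF finite i] le_less_trans by meson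
    qed
    then show ?thesis
      using complete[OF i] unfolding Metric_space.mcomplete_def[OF metric[OF i]] by blast
  qed
  then obtain a where "\<And>i. i \<in> I \<Longrightarrow> limitin (Metric_space.mtopology (X i) (d i)) (\<lambda>n. \<sigma> n i) (a i) sequentially"
    by metis
  then have "limitin (Metric_space.mtopology (PiE I X) (sup_dist I d)) \<sigma> (restrict a I) sequentially"
    by (simp add: limitin_sup_dist_iff[OF \<sigma>])
  then show "\<exists>l. limitin (Metric_space.mtopology (PiE I X) (sup_dist I d)) \<sigma> l sequentially"
    by blast
qed

end

section \<open>Partially monotone systems\<close>

lemma partially_monotone_prec_mono:
  assumes pm: "partially_monotone N X le eps T"
    and order: "partial_order_on_set (X i) (le i)"
    and T_maps: "\<And>x. x \<in> PiE {..<N} X \<Longrightarrow> T i x \<in> X i"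
    and i: "i < N" and x: "x \<in> PiE {..<N} X" and y: "y \<in> PiE {..<N} X"
    and prec: "prec N le eps i x y"
  shows "le i (T i x) (T i y)"
proof -
  \<comment> \<open>Pass from \<open>x\<close> to \<open>y\<close> changing one coordinate at a time.\<close>
  define z where "z k = restrict (\<lambda>j. if j < k then y j else x j) {..<N}" for k
  have z_in: "z k \<in> PiE {..<N} X" for k
    using x y by (auto simp: z_def PiE_iff)
  have step: "le i (T i (z k)) (T i (z (Suc k)))" if k: "k < N" for k
  proof -
    have same: "\<forall>m<N. m \<noteq> k \<longrightarrow> z k m = z (Suc k) m" "\<forall>m<N. m \<noteq> k \<longrightarrow> z (Suc k) m = z k m"
      by (auto simp: z_def)
    have at_k: "z k k = x k" "z (Suc k) k = y k"
      using k by (auto simp: z_def)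
    show ?thesis
    proof (cases "eps i k")
      case True
      with prec k have "le k (x k) (y k)"
        unfolding prec_def by auto
      with pm i k z_in same True at_k show ?thesis
        unfolding partially_monotone_def by metis
    next
      case False
      with prec k have "le k (y k) (x k)"
        unfolding prec_def by auto
      with pm i k z_in same False at_k show ?thesis
        unfolding partially_monotone_def by metis
    qed
  qed
  have "le i (T i (z 0)) (T i (z k))" if "k \<le> N" for k
    using that
  proof (induction k)
    case 0
    show ?case
      using order T_maps[OF z_in] unfolding partial_order_on_set_def by blast
  next
    case (Suc k)
    then have "le i (T i (z 0)) (T i (z k))" "le i (T i (z k)) (T i (z (Suc k)))"
      using step by simp_all
    then show ?case
      using order T_maps[OF z_in] unfolding partial_order_on_set_def by blast
  qed
  moreover have "z 0 = x" "z N = y"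
    using x y by (auto simp: z_def PiE_iff extensional_def)
  ultimately show ?thesis
    by (metis order_refl)
qed

locale partially_monotone_system =
  fixes N :: nat and X :: "nat \<Rightarrow> 'a set" and le :: "nat \<Rightarrow> 'a \<Rightarrow> 'a \<Rightarrow> bool"
    and d :: "nat \<Rightarrow> 'a \<Rightarrow> 'a \<Rightarrow> real" and eps :: "nat \<Rightarrow> nat \<Rightarrow> bool"
    and T :: "nat \<Rightarrow> (nat \<Rightarrow> 'a) \<Rightarrow> 'a" and \<phi> :: "real \<Rightarrow> real"
  assumes N_pos: "0 < N"
    and order: "\<And>i. i < N \<Longrightarrow> partial_order_on_set (X i) (le i)"
    and bidir: "\<And>i. i < N \<Longrightarrow> bi_directed (X i) (le i)"
    and metric: "\<And>i. i < N \<Longrightarrow> Metric_space (X i) (d i)"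
    and complete: "\<And>i. i < N \<Longrightarrow> Metric_space.mcomplete (X i) (d i)"
    and T_maps: "\<And>i x. i < N \<Longrightarrow> x \<in> PiE {..<N} X \<Longrightarrow> T i x \<in> X i"
    and pm: "partially_monotone N X le eps T"
    and phi: "Phi \<phi>"
    and contraction: "\<And>i x y. i < N \<Longrightarrow> x \<in> PiE {..<N} X \<Longrightarrow> y \<in> PiE {..<N} X \<Longrightarrow>
        prec N le eps i x y \<Longrightarrow> d i (T i x) (T i y) \<le> \<phi> (sup_dist {..<N} d x y)"
begin

abbreviation XN :: "(nat \<Rightarrow> 'a) set"
  where "XN \<equiv> PiE {..<N} X"

abbreviation D :: "(nat \<Rightarrow> 'a) \<Rightarrow> (nat \<Rightarrow> 'a) \<Rightarrow> real"
  where "D \<equiv> sup_dist {..<N} d"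

lemma XN_metric: "Metric_space XN D"
  using N_pos metric by (intro sup_dist_metric) auto

lemma XN_pair_metric: "Metric_space12 XN D XN D"
  by (simp add: Metric_space12_def XN_metric)

definition coupled :: "(nat \<Rightarrow> 'a) \<Rightarrow> (nat \<Rightarrow> 'a) \<Rightarrow> nat \<Rightarrow> 'a"
  where "coupled x y = restrict (\<lambda>i. T i (sigma N eps i x y)) {..<N}"

text \<open>The coupled step maps \<open>(u\<^sup>n, v\<^sup>n)\<close> to \<open>(u\<^sup>n\<^sup>+\<^sup>1, v\<^sup>n\<^sup>+\<^sup>1)\<close>; the hypotheses
  (d1) and (d2) of the theorem are \<open>T_continuous\<close> and \<open>monotone_limits_bounded\<close>.\<close>

definition coupled_step :: "(nat \<Rightarrow> 'a) \<times> (nat \<Rightarrow> 'a) \<Rightarrow> (nat \<Rightarrow> 'a) \<times> (nat \<Rightarrow> 'a)"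
  where "coupled_step p = (coupled (fst p) (snd p), coupled (snd p) (fst p))"

definition pair_le :: "(nat \<Rightarrow> 'a) \<times> (nat \<Rightarrow> 'a) \<Rightarrow> (nat \<Rightarrow> 'a) \<times> (nat \<Rightarrow> 'a) \<Rightarrow> bool"
  where "pair_le p q \<longleftrightarrow> (\<forall>j<N. le j (fst p j) (fst q j) \<and> le j (snd q j) (snd p j))"

definition T_continuous :: bool
  where "T_continuous \<longleftrightarrow> (\<forall>i<N. continuous_map (product_topology (\<lambda>j. Metric_space.mtopology (X j) (d j)) {..<N})
                                   (Metric_space.mtopology (X i) (d i)) (T i))"

definition monotone_limits_bounded :: bool
  where "monotone_limits_bounded \<longleftrightarrow> (\<forall>i<N. \<forall>s l. range s \<subseteq> X i \<longrightarrow>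
           limitin (Metric_space.mtopology (X i) (d i)) s l sequentially \<longrightarrow>
           ((\<forall>m n. m \<le> n \<longrightarrow> le i (s m) (s n)) \<longrightarrow> (\<forall>n. le i (s n) l)) \<and>
           ((\<forall>m n. m \<le> n \<longrightarrow> le i (s n) (s m)) \<longrightarrow> (\<forall>n. le i l (s n))))"

lemma sigma_in: "x \<in> XN \<Longrightarrow> y \<in> XN \<Longrightarrow> sigma N eps i x y \<in> XN"
  by (auto simp: sigma_def PiE_iff extensional_def)

lemma coupled_in: "x \<in> XN \<Longrightarrow> y \<in> XN \<Longrightarrow> coupled x y \<in> XN"
  by (simp add: coupled_def T_maps sigma_in)

lemma coupled_step_in: "p \<in> XN \<times> XN \<Longrightarrow> coupled_step p \<in> XN \<times> XN"
  by (auto simp: coupled_step_def coupled_in mem_Times_iff)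

lemma coupled_step_swap: "coupled_step (prod.swap p) = prod.swap (coupled_step p)"
  by (simp add: coupled_step_def)

lemma pair_le_swap: "pair_le p q \<Longrightarrow> pair_le (prod.swap q) (prod.swap p)"
  by (simp add: pair_le_def)

lemma max_dist_swap: "max_dist D D (prod.swap q) (prod.swap p) = max_dist D D p q"
  using Metric_space.commute[OF XN_metric] by (simp add: max_dist_def max.commute)

lemma prec_sigma: "pair_le p q \<Longrightarrow> prec N le eps i (sigma N eps i (fst p) (snd p)) (sigma N eps i (fst q) (snd q))"
  by (simp add: pair_le_def prec_def sigma_def)

lemma sup_dist_sigma_le: "D (sigma N eps i (fst p) (snd p)) (sigma N eps i (fst q) (snd q)) \<le> max_dist D D p q"
proof -
  have "d j (sigma N eps i (fst p) (snd p) j) (sigma N eps i (fst q) (snd q) j) \<le> max_dist D D p q"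
    if "j < N" for j
    using that sup_dist_ge[of "{..<N}" j d "fst p" "fst q"] sup_dist_ge[of "{..<N}" j d "snd p" "snd q"]
    by (auto simp: sigma_def max_dist_def)
  then show ?thesis
    using N_pos by (subst sup_dist_le_iff) auto
qed

lemma coupled_mono:
  assumes "p \<in> XN \<times> XN" "q \<in> XN \<times> XN" "pair_le p q" "j < N"
  shows "le j (coupled (fst p) (snd p) j) (coupled (fst q) (snd q) j)"
  using assms partially_monotone_prec_mono[OF pm order T_maps _ sigma_in sigma_in prec_sigma]
  by (simp add: coupled_def mem_Times_iff)

lemma coupled_contraction:
  assumes p: "p \<in> XN \<times> XN" and q: "q \<in> XN \<times> XN" and "pair_le p q"
  shows "D (coupled (fst p) (snd p)) (coupled (fst q) (snd q)) \<le> \<phi> (max_dist D D p q)"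
proof -
  have "d i (T i (sigma N eps i (fst p) (snd p))) (T i (sigma N eps i (fst q) (snd q))) \<le> \<phi> (max_dist D D p q)"
    if i: "i < N" for i
  proof -
    have "d i (T i (sigma N eps i (fst p) (snd p))) (T i (sigma N eps i (fst q) (snd q)))
        \<le> \<phi> (D (sigma N eps i (fst p) (snd p)) (sigma N eps i (fst q) (snd q)))"
      using assms i by (intro contraction sigma_in prec_sigma) (auto simp: mem_Times_iff)
    also have "\<dots> \<le> \<phi> (max_dist D D p q)"
      using Metric_space.nonneg[OF XN_metric] sup_dist_sigma_le by (rule Phi_mono[OF phi])
    finally show ?thesis .
  qed
  then show ?thesis
    using N_pos by (subst sup_dist_le_iff) (auto simp: coupled_def)
qed

sublocale pairs: ordered_phi_contraction "XN \<times> XN" "max_dist D D" pair_le coupled_step \<phi>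
proof (intro ordered_phi_contraction.intro ordered_phi_contraction_axioms.intro)
  show "Metric_space (XN \<times> XN) (max_dist D D)"
    using XN_pair_metric by (rule Metric_space12.max_dist_metric)
  show "Phi \<phi>"
    by (rule phi)
next
  fix p assume "p \<in> XN \<times> XN"
  then show "coupled_step p \<in> XN \<times> XN"
    by (rule coupled_step_in)
next
  fix p assume "p \<in> XN \<times> XN"
  then show "pair_le p p"
    using order unfolding pair_le_def partial_order_on_set_def by (auto simp: mem_Times_iff PiE_iff)
next
  fix p q r assume "p \<in> XN \<times> XN" "q \<in> XN \<times> XN" "r \<in> XN \<times> XN" "pair_le p q" "pair_le q r"
  then show "pair_le p r"
    using order unfolding pair_le_def partial_order_on_set_def
    by (simp add: mem_Times_iff PiE_iff) blast
next
  fix p q assume p: "p \<in> XN \<times> XN" and q: "q \<in> XN \<times> XN" and "pair_le p q"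
  then show "pair_le (coupled_step p) (coupled_step q)"
    using coupled_mono[OF p q] coupled_mono[of "prod.swap q" "prod.swap p"] pair_le_swap
    by (auto simp: pair_le_def coupled_step_def mem_Times_iff)
next
  fix p q assume p: "p \<in> XN \<times> XN" and q: "q \<in> XN \<times> XN" and "pair_le p q"
  then show "max_dist D D (coupled_step p) (coupled_step q) \<le> \<phi> (max_dist D D p q)"
    using coupled_contraction[of p q] coupled_contraction[of "prod.swap q" "prod.swap p"]
      pair_le_swap max_dist_swap Metric_space.commute[OF XN_metric]
    by (auto simp: max_dist_def coupled_step_def mem_Times_iff)
next
  fix p q assume "p \<in> XN \<times> XN" "q \<in> XN \<times> XN"
  \<comment> \<open>Bi-directedness gives a lower bound of the first and an upper bound of the second components.\<close>
  then have "\<forall>j<N. \<exists>l\<in>X j. le j l (fst p j) \<and> le j l (fst q j)"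
    "\<forall>j<N. \<exists>u\<in>X j. le j (snd p j) u \<and> le j (snd q j) u"
    using bidir unfolding bi_directed_def by (auto simp: mem_Times_iff PiE_iff)
  then obtain l u where
    "\<And>j. j < N \<Longrightarrow> l j \<in> X j \<and> le j (l j) (fst p j) \<and> le j (l j) (fst q j)"
    "\<And>j. j < N \<Longrightarrow> u j \<in> X j \<and> le j (snd p j) (u j) \<and> le j (snd q j) (u j)"
    by metis
  then show "\<exists>r\<in>XN \<times> XN. pair_le r p \<and> pair_le r q"
    by (intro bexI[of _ "(restrict l {..<N}, restrict u {..<N})"]) (auto simp: pair_le_def)
qed

lemma limitin_XN_iff:
  assumes "\<And>x. f x \<in> XN" "l \<in> extensional {..<N}"
  shows "limitin (Metric_space.mtopology XN D) f l F \<longleftrightarrow>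
    (\<forall>i<N. limitin (Metric_space.mtopology (X i) (d i)) (\<lambda>x. f x i) (l i) F)"
  using N_pos metric assms by (subst limitin_sup_dist_iff) auto

lemma limitin_pairs_iff:
  assumes s: "\<And>n. s n \<in> XN \<times> XN" and p: "p \<in> extensional {..<N} \<times> extensional {..<N}"
  shows "limitin pairs.mtopology s p sequentially \<longleftrightarrow>
    (\<forall>i<N. limitin (Metric_space.mtopology (X i) (d i)) (\<lambda>n. fst (s n) i) (fst p i) sequentially \<and>
           limitin (Metric_space.mtopology (X i) (d i)) (\<lambda>n. snd (s n) i) (snd p i) sequentially)"
proof -
  have "fst (s n) \<in> XN" "snd (s n) \<in> XN" for n
    using s by (simp_all add: mem_Times_iff)
  then show ?thesis
    using p by (auto simp: Metric_space12.limitin_max_dist_iff[OF XN_pair_metric] limitin_XN_iff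
        mem_Times_iff)
qed

lemma pairs_mcomplete: "pairs.mcomplete"
  using XN_pair_metric N_pos metric complete
  by (intro Metric_space12.mcomplete_max_dist mcomplete_sup_dist) auto

lemma topspace_product_XN:
  "topspace (product_topology (\<lambda>j. Metric_space.mtopology (X j) (d j)) {..<N}) = XN"
  by (simp, rule PiE_cong) (simp add: Metric_space.topspace_mtopology[OF metric])

lemma coupled_limit:
  assumes cont: "continuous_map (product_topology (\<lambda>j. Metric_space.mtopology (X j) (d j)) {..<N})
                   (Metric_space.mtopology (X i) (d i)) (T i)"
    and i: "i < N" and xs: "\<And>n. xs n \<in> XN" and ys: "\<And>n. ys n \<in> XN"
    and lim_x: "\<And>j. j < N \<Longrightarrow> limitin (Metric_space.mtopology (X j) (d j)) (\<lambda>n. xs n j) (x j) sequentially"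
    and lim_y: "\<And>j. j < N \<Longrightarrow> limitin (Metric_space.mtopology (X j) (d j)) (\<lambda>n. ys n j) (y j) sequentially"
  shows "limitin (Metric_space.mtopology (X i) (d i)) (\<lambda>n. coupled (xs n) (ys n) i) (coupled x y i) sequentially"
proof -
  have "limitin (product_topology (\<lambda>j. Metric_space.mtopology (X j) (d j)) {..<N})
      (\<lambda>n. sigma N eps i (xs n) (ys n)) (sigma N eps i x y) sequentially"
    unfolding limitin_componentwise topspace_product_XN
  proof (intro conjI ballI)
    show "sigma N eps i x y \<in> extensional {..<N}"
      by (simp add: sigma_def extensional_def)
    show "\<forall>\<^sub>F n in sequentially. sigma N eps i (xs n) (ys n) \<in> XN"
      using sigma_in[OF xs ys] by simp
    fix j assume "j \<in> {..<N}"
    then show "limitin (Metric_space.mtopology (X j) (d j)) (\<lambda>n. sigma N eps i (xs n) (ys n) j) (sigma N eps i x y j) sequentially"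
      using lim_x lim_y by (simp add: sigma_def)
  qed
  from continuous_map_limit[OF cont this] show ?thesis
    using i by (simp add: coupled_def o_def)
qed

lemma coupled_step_continuous:
  assumes cont: T_continuous
    and s: "\<And>n. s n \<in> XN \<times> XN" and lim: "limitin pairs.mtopology s p sequentially"
  shows "limitin pairs.mtopology (\<lambda>n. coupled_step (s n)) (coupled_step p) sequentially"
proof -
  have p: "p \<in> XN \<times> XN"
    using lim by (simp add: pairs.limitin_metric_dist_null)
  have components: "\<forall>i<N. limitin (Metric_space.mtopology (X i) (d i)) (\<lambda>n. fst (s n) i) (fst p i) sequentially \<and>
           limitin (Metric_space.mtopology (X i) (d i)) (\<lambda>n. snd (s n) i) (snd p i) sequentially"
    using lim p by (simp add: limitin_pairs_iff[OF s] mem_Times_iff PiE_iff)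
  have fst_in: "fst (s n) \<in> XN" and snd_in: "snd (s n) \<in> XN" for n
    using s by (simp_all add: mem_Times_iff)
  have ext: "coupled_step p \<in> extensional {..<N} \<times> extensional {..<N}"
    using coupled_step_in[OF p] by (auto simp: mem_Times_iff PiE_iff)
  show ?thesis
    unfolding limitin_pairs_iff[OF coupled_step_in[OF s] ext]
  proof (intro allI impI conjI)
    fix i assume i: "i < N"
    show "limitin (Metric_space.mtopology (X i) (d i)) (\<lambda>n. fst (coupled_step (s n)) i) (fst (coupled_step p) i) sequentially"
      using coupled_limit[OF cont[unfolded T_continuous_def, rule_format, OF i] i fst_in snd_in] components
      by (simp add: coupled_step_def)
    show "limitin (Metric_space.mtopology (X i) (d i)) (\<lambda>n. snd (coupled_step (s n)) i) (snd (coupled_step p) i) sequentially"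
      using coupled_limit[OF cont[unfolded T_continuous_def, rule_format, OF i] i snd_in fst_in] components
      by (simp add: coupled_step_def)
  qed
qed

lemma pair_le_limit:
  assumes bounded: monotone_limits_bounded
    and s: "\<And>n. s n \<in> XN \<times> XN" and incr: "\<And>m n. m \<le> n \<Longrightarrow> pair_le (s m) (s n)"
    and lim: "limitin pairs.mtopology s p sequentially"
  shows "pair_le (s n) p"
  unfolding pair_le_def
proof (intro allI impI)
  fix i assume i: "i < N"
  have p: "p \<in> XN \<times> XN"
    using lim by (simp add: pairs.limitin_metric_dist_null)
  then have "limitin (Metric_space.mtopology (X i) (d i)) (\<lambda>n. fst (s n) i) (fst p i) sequentially"
    "limitin (Metric_space.mtopology (X i) (d i)) (\<lambda>n. snd (s n) i) (snd p i) sequentially"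
    using lim i by (simp_all add: limitin_pairs_iff[OF s] mem_Times_iff PiE_iff)
  moreover have "range (\<lambda>n. fst (s n) i) \<subseteq> X i" "range (\<lambda>n. snd (s n) i) \<subseteq> X i"
    using s i by (auto simp: mem_Times_iff PiE_iff)
  moreover have "\<forall>m n. m \<le> n \<longrightarrow> le i (fst (s m) i) (fst (s n) i)"
    "\<forall>m n. m \<le> n \<longrightarrow> le i (snd (s n) i) (snd (s m) i)"
    using incr i by (simp_all add: pair_le_def)
  ultimately show "le i (fst (s n) i) (fst p i) \<and> le i (snd p i) (snd (s n) i)"
    using bounded[unfolded monotone_limits_bounded_def, rule_format, OF i, of "\<lambda>n. fst (s n) i" "fst p i"]
      bounded[unfolded monotone_limits_bounded_def, rule_format, OF i, of "\<lambda>n. snd (s n) i" "snd p i"]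
    by simp
qed

lemma orbit_image_converges:
  assumes "T_continuous \<or> monotone_limits_bounded"
    and p0: "p0 \<in> XN \<times> XN" "pair_le p0 (coupled_step p0)"
    and lim: "limitin pairs.mtopology (\<lambda>n. (coupled_step ^^ n) p0) p sequentially"
  shows "limitin pairs.mtopology (\<lambda>n. coupled_step ((coupled_step ^^ n) p0)) (coupled_step p) sequentially"
  using assms(1)
proof
  assume T_continuous
  then show ?thesis
    using p0(1) lim by (intro coupled_step_continuous pairs.funpow_in)
next
  assume monotone_limits_bounded
  moreover have "(coupled_step ^^ n) p0 \<in> XN \<times> XN" for n
    using p0(1) by (rule pairs.funpow_in)
  moreover have "pair_le ((coupled_step ^^ m) p0) ((coupled_step ^^ n) p0)" if "m \<le> n" for m n
    using p0 that by (rule pairs.orbit_increasing)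
  ultimately have "pair_le ((coupled_step ^^ n) p0) p" for n
    using lim by (rule pair_le_limit)
  with lim p0(1) show ?thesis
    by (rule pairs.orbit_image_converges_if_upper_bound)
qed

lemma solution_iff_coupled_fixpoint:
  assumes x: "x \<in> XN"
  shows "(\<forall>i<N. T i x = x i) \<longleftrightarrow> coupled_step (x, x) = (x, x)"
proof -
  have "sigma N eps i x x = x" for i
    using x by (auto simp: sigma_def PiE_iff extensional_def)
  then have "coupled x x = restrict (\<lambda>i. T i x) {..<N}"
    by (simp add: coupled_def)
  moreover have "restrict (\<lambda>i. T i x) {..<N} = x \<longleftrightarrow> (\<forall>i<N. T i x = x i)"
    using x by (auto simp: fun_eq_iff PiE_iff extensional_def)
  ultimately show ?thesis
    by (simp add: coupled_step_def)
qed

lemma coupled_step_funpow: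
  assumes "u 0 \<in> XN" "v 0 \<in> XN"
    and "\<forall>n. \<forall>i<N. u (Suc n) i = T i (sigma N eps i (u n) (v n)) \<and> v (Suc n) i = T i (sigma N eps i (v n) (u n))"
  shows "(coupled_step ^^ n) (u 0, v 0) = (restrict (u n) {..<N}, restrict (v n) {..<N})"
proof (induction n)
  case 0
  show ?case
    using assms(1,2) by (simp add: PiE_iff extensional_restrict)
next
  case (Suc n)
  have sigma_restrict: "sigma N eps i (restrict x {..<N}) (restrict y {..<N}) = sigma N eps i x y" for i x y
    by (simp add: sigma_def fun_eq_iff)
  have "coupled (restrict (u n) {..<N}) (restrict (v n) {..<N}) = restrict (u (Suc n)) {..<N}"
    "coupled (restrict (v n) {..<N}) (restrict (u n) {..<N}) = restrict (v (Suc n)) {..<N}"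
    using assms(3) by (auto simp: coupled_def sigma_restrict intro!: restrict_ext)
  with Suc show ?case
    by (simp only: funpow.simps(2) comp_apply coupled_step_def fst_conv snd_conv)
qed

lemma coupled_step_diagonal_fixpoint:
  assumes d1_d2: "T_continuous \<or> monotone_limits_bounded"
    and x0: "x0 \<in> XN" and y0: "y0 \<in> XN"
    and x0_sub: "\<And>i. i < N \<Longrightarrow> le i (x0 i) (T i (sigma N eps i x0 y0))"
    and y0_sup: "\<And>i. i < N \<Longrightarrow> le i (T i (sigma N eps i y0 x0)) (y0 i)"
  obtains x where "x \<in> XN" and "\<And>q. q \<in> XN \<times> XN \<Longrightarrow> coupled_step q = q \<longleftrightarrow> q = (x, x)"
    and "\<And>w. w \<in> XN \<times> XN \<Longrightarrow> limitin pairs.mtopology (\<lambda>n. (coupled_step ^^ n) w) (x, x) sequentially"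
proof -
  have p0: "(x0, y0) \<in> XN \<times> XN"
    using x0 y0 by simp
  have p0_le: "pair_le (x0, y0) (coupled_step (x0, y0))"
    unfolding pair_le_def coupled_step_def coupled_def
    using x0_sub y0_sup by simp
  have "\<exists>p\<in>XN \<times> XN. coupled_step p = p \<and> (\<forall>q\<in>XN \<times> XN. coupled_step q = q \<longrightarrow> q = p) \<and>
      (\<forall>w\<in>XN \<times> XN. limitin pairs.mtopology (\<lambda>n. (coupled_step ^^ n) w) p sequentially)"
    using pairs.unique_attracting_fixpoint[OF pairs_mcomplete p0 p0_le
        orbit_image_converges[OF d1_d2 p0 p0_le]]
    by blast
  then obtain p where p: "p \<in> XN \<times> XN" and fixed: "coupled_step p = p"
    and unique: "\<forall>q\<in>XN \<times> XN. coupled_step q = q \<longrightarrow> q = p"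
    and attracts: "\<forall>w\<in>XN \<times> XN. limitin pairs.mtopology (\<lambda>n. (coupled_step ^^ n) w) p sequentially"
    by blast
  have "prod.swap p \<in> XN \<times> XN"
    using p by (cases p) simp
  moreover have "coupled_step (prod.swap p) = prod.swap p"
    using fixed by (simp add: coupled_step_swap)
  ultimately have "prod.swap p = p"
    by (rule unique[rule_format])
  then have "snd p = fst p"
    by (metis fst_swap)
  then obtain x where p_eq: "p = (x, x)"
    using prod.collapse by metis
  show thesis
  proof (rule that)
    show "x \<in> XN"
      using p p_eq by simp
    show "coupled_step q = q \<longleftrightarrow> q = (x, x)" if "q \<in> XN \<times> XN" for q
      using that unique fixed p_eq by blast
    show "limitin pairs.mtopology (\<lambda>n. (coupled_step ^^ n) w) (x, x) sequentially" if "w \<in> XN \<times> XN" for w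
      using attracts[rule_format, OF that] p_eq by simp
  qed
qed

lemma coupled_iterates_converge:
  assumes x: "x \<in> XN"
    and attracts: "limitin pairs.mtopology (\<lambda>n. (coupled_step ^^ n) (u 0, v 0)) (x, x) sequentially"
    and u0: "u 0 \<in> XN" and v0: "v 0 \<in> XN"
    and rec: "\<forall>n. \<forall>i<N. u (Suc n) i = T i (sigma N eps i (u n) (v n)) \<and> v (Suc n) i = T i (sigma N eps i (v n) (u n))"
    and i: "i < N"
  shows "limitin (Metric_space.mtopology (X i) (d i)) (\<lambda>n. u n i) (x i) sequentially"
    and "limitin (Metric_space.mtopology (X i) (d i)) (\<lambda>n. v n i) (x i) sequentially"
proof -
  have "limitin pairs.mtopology (\<lambda>n. (restrict (u n) {..<N}, restrict (v n) {..<N})) (x, x) sequentially"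
    using attracts coupled_step_funpow[OF u0 v0 rec] by simp
  moreover have "(restrict (u n) {..<N}, restrict (v n) {..<N}) \<in> XN \<times> XN" for n
    using pairs.funpow_in[of "(u 0, v 0)" n] u0 v0 coupled_step_funpow[OF u0 v0 rec] by simp
  moreover have "(x, x) \<in> extensional {..<N} \<times> extensional {..<N}"
    using x by (simp add: PiE_iff)
  ultimately show "limitin (Metric_space.mtopology (X i) (d i)) (\<lambda>n. u n i) (x i) sequentially"
    "limitin (Metric_space.mtopology (X i) (d i)) (\<lambda>n. v n i) (x i) sequentially"
    using i by (simp_all add: limitin_pairs_iff)
qed

theorem unique_solution:
  assumes "T_continuous \<or> monotone_limits_bounded"
    and "x0 \<in> XN" and "y0 \<in> XN"
    and "\<And>i. i < N \<Longrightarrow> le i (x0 i) (T i (sigma N eps i x0 y0))"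
    and "\<And>i. i < N \<Longrightarrow> le i (T i (sigma N eps i y0 x0)) (y0 i)"
  shows "\<exists>xs \<in> XN. (\<forall>i<N. T i xs = xs i) \<and> (\<forall>z \<in> XN. (\<forall>i<N. T i z = z i) \<longrightarrow> z = xs) \<and>
           (\<forall>u v :: nat \<Rightarrow> nat \<Rightarrow> 'a. u 0 \<in> XN \<longrightarrow> v 0 \<in> XN \<longrightarrow>
              (\<forall>n. \<forall>i<N. u (Suc n) i = T i (sigma N eps i (u n) (v n)) \<and>
                          v (Suc n) i = T i (sigma N eps i (v n) (u n))) \<longrightarrow>
              (\<forall>i<N. limitin (Metric_space.mtopology (X i) (d i)) (\<lambda>n. u n i) (xs i) sequentially \<and>
                     limitin (Metric_space.mtopology (X i) (d i)) (\<lambda>n. v n i) (xs i) sequentially))"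
proof -
  obtain x where x: "x \<in> XN"
    and fixed_iff: "\<And>q. q \<in> XN \<times> XN \<Longrightarrow> coupled_step q = q \<longleftrightarrow> q = (x, x)"
    and attracts: "\<And>w. w \<in> XN \<times> XN \<Longrightarrow> limitin pairs.mtopology (\<lambda>n. (coupled_step ^^ n) w) (x, x) sequentially"
    using coupled_step_diagonal_fixpoint[OF assms] by blast
  have solution_iff: "(\<forall>i<N. T i z = z i) \<longleftrightarrow> z = x" if "z \<in> XN" for z
    using solution_iff_coupled_fixpoint[OF that] fixed_iff[of "(z, z)"] that by simp
  show ?thesis
  proof (intro bexI[of _ x] conjI)
    show "\<forall>i<N. T i x = x i" and "\<forall>z\<in>XN. (\<forall>i<N. T i z = z i) \<longrightarrow> z = x"
      using solution_iff x by blast+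
    show "\<forall>u v :: nat \<Rightarrow> nat \<Rightarrow> 'a. u 0 \<in> XN \<longrightarrow> v 0 \<in> XN \<longrightarrow>
        (\<forall>n. \<forall>i<N. u (Suc n) i = T i (sigma N eps i (u n) (v n)) \<and> v (Suc n) i = T i (sigma N eps i (v n) (u n))) \<longrightarrow>
        (\<forall>i<N. limitin (Metric_space.mtopology (X i) (d i)) (\<lambda>n. u n i) (x i) sequentially \<and>
               limitin (Metric_space.mtopology (X i) (d i)) (\<lambda>n. v n i) (x i) sequentially)"
      using coupled_iterates_converge[OF x attracts] by (simp add: mem_Times_iff)
  qed (rule x)
qed

end

theorem theorem5:
  fixes N :: nat
    and X :: "nat \<Rightarrow> 'a set"
    and le :: "nat \<Rightarrow> 'a \<Rightarrow> 'a \<Rightarrow> bool"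
    and d :: "nat \<Rightarrow> 'a \<Rightarrow> 'a \<Rightarrow> real"
    and eps :: "nat \<Rightarrow> nat \<Rightarrow> bool"
    and T :: "nat \<Rightarrow> (nat \<Rightarrow> 'a) \<Rightarrow> 'a"
    and \<phi> :: "real \<Rightarrow> real"
    and x0 y0 :: "nat \<Rightarrow> 'a"
  assumes N2: "N \<ge> 2"
    and order: "\<And>i. i < N \<Longrightarrow> partial_order_on_set (X i) (le i)"
    and bidir: "\<And>i. i < N \<Longrightarrow> bi_directed (X i) (le i)"
    and metric: "\<And>i. i < N \<Longrightarrow> Metric_space (X i) (d i)"
    and complete: "\<And>i. i < N \<Longrightarrow> Metric_space.mcomplete (X i) (d i)"
    and T_maps: "\<And>i x. i < N \<Longrightarrow> x \<in> PiE {..<N} X \<Longrightarrow> T i x \<in> X i"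
    and pm: "partially_monotone N X le eps T"
    and phi: "Phi \<phi>"
    and contraction: "\<And>i x y. i < N \<Longrightarrow> x \<in> PiE {..<N} X \<Longrightarrow> y \<in> PiE {..<N} X \<Longrightarrow>
        prec N le eps i x y \<Longrightarrow>
        d i (T i x) (T i y) \<le> \<phi> (Max ((\<lambda>j. d j (x j) (y j)) ` {..<N}))"
    and d1_d2:
      "(\<forall>i<N. continuous_map
                (product_topology (\<lambda>j. Metric_space.mtopology (X j) (d j)) {..<N})
                (Metric_space.mtopology (X i) (d i)) (T i))
       \<or> (\<forall>i<N. \<forall>s l. range s \<subseteq> X i \<longrightarrow>
                limitin (Metric_space.mtopology (X i) (d i)) s l sequentially \<longrightarrow>
                ((\<forall>m n. m \<le> n \<longrightarrow> le i (s m) (s n)) \<longrightarrow> (\<forall>n. le i (s n) l)) \<and>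
                ((\<forall>m n. m \<le> n \<longrightarrow> le i (s n) (s m)) \<longrightarrow> (\<forall>n. le i l (s n))))"
    and x0: "x0 \<in> PiE {..<N} X"
    and y0: "y0 \<in> PiE {..<N} X"
    and x0_sub: "\<And>i. i < N \<Longrightarrow> le i (x0 i) (T i (sigma N eps i x0 y0))"
    and y0_sup: "\<And>i. i < N \<Longrightarrow> le i (T i (sigma N eps i y0 x0)) (y0 i)"
  shows "\<exists>xs \<in> PiE {..<N} X.
           (\<forall>i<N. T i xs = xs i) \<and>
           (\<forall>z \<in> PiE {..<N} X. (\<forall>i<N. T i z = z i) \<longrightarrow> z = xs) \<and>
           (\<forall>u v :: nat \<Rightarrow> nat \<Rightarrow> 'a.
              u 0 \<in> PiE {..<N} X \<longrightarrow> v 0 \<in> PiE {..<N} X \<longrightarrow>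
              (\<forall>n. \<forall>i<N. u (Suc n) i = T i (sigma N eps i (u n) (v n)) \<and>
                          v (Suc n) i = T i (sigma N eps i (v n) (u n))) \<longrightarrow>
              (\<forall>i<N. limitin (Metric_space.mtopology (X i) (d i)) (\<lambda>n. u n i) (xs i) sequentially \<and>
                     limitin (Metric_space.mtopology (X i) (d i)) (\<lambda>n. v n i) (xs i) sequentially))"
proof -
  interpret partially_monotone_system N X le d eps T \<phi>
    using N2 order bidir metric complete T_maps pm phi contraction
    by (intro partially_monotone_system.intro) (simp_all add: sup_dist_def)
  show ?thesis
    using d1_d2 x0 y0 x0_sub y0_sup
    unfolding T_continuous_def[symmetric] monotone_limits_bounded_def[symmetric]
    by (rule unique_solution)
qed

end
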